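(* Let $m>0$ and let $\chi\in C_c^\infty(\mathbb R)$ be even with $\chi(z)=1$ for $|z|<z_0$, $\chi(z)=0$ for $|z|>2z_0$, $z_0\ll1$. Suppose $\mathcal E$ is twice differentiable on $(0,2z_0)$ with $|\partial_z^j\mathcal E(z)|\lesssim|\partial_z^j(\log z)^{-2}|$ for $j=0,1,2$ and $0<z<2z_0$. Then for $t>2$, $$\Big|\int_0^\infty e^{-it\sqrt{z^2+m^2}}\frac{z\chi(z)}{\sqrt{z^2+m^2}}\mathcal E(z)\,dz\Big|\lesssim\frac1{t\log^2t}.$$ *)

theory Defs
  imports "HOL-Analysis.Analysis"
begin

end

theory Submission
  imports Defs
begin

text \<open>
  Let \<phi> z = sqrt (z^2 + m^2) and g = \<chi> E. Since \<phi>' = z / \<phi>, the integrand is the derivative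
  of the phase exp (-i t \<phi>) times g / (-i t). Split the integral at \<delta> = 1 / sqrt t. Near the
  origin the integrand is bounded by (z / m) |g| = O(\<delta> / ln^2 \<delta>), so this part is
  O(\<delta>^2 / ln^2 \<delta>) = O(1 / (t ln^2 t)). On [\<delta>, 2 z0] integrate by parts, absorbing z / \<phi> into
  the derivative of the phase; the boundary term g(\<delta>) / t is O(1 / (t ln^2 t)). The new integrand
  involves g' = O(1 / (z (-ln z)^3)), which is not small enough, so integrate by parts once more:
  each derivative of g costs a factor 1 / z, and the boundary term together with the integral of
  1 / (z^3 (-ln z)^3) over [\<delta>, 2 z0] is O(1 / (\<delta>^2 (-ln \<delta>)^3)) = O(t / ln^3 t), which after
  division by t^2 is again O(1 / (t ln^2 t)). The bounds on g, g' and g'' follow from those on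
  E because \<chi> and its first two derivatives are bounded.
\<close>

lemma norm_integral_le_by_parts:
  fixes u F v :: "real \<Rightarrow> complex" and c :: complex
  assumes "a \<le> b" "c \<noteq> 0" "continuous_on {a..b} u"
    and u_deriv: "\<And>z. z \<in> {a<..<b} \<Longrightarrow> (u has_vector_derivative c * F z + v z) (at z)"
    and F_int: "F integrable_on {a..b}"
  shows "v integrable_on {a..b}"
    and "norm (integral {a..b} F) \<le> (norm (u b) + norm (u a) + norm (integral {a..b} v)) / norm c"
proof -
  have "((\<lambda>z. c * F z + v z) has_integral u b - u a) {a..b}"
    using assms by (intro fundamental_theorem_of_calculus_interior) auto
  moreover have "((\<lambda>z. c * F z) has_integral c * integral {a..b} F) {a..b}"
    using F_int by (intro has_integral_mult_right) auto
  ultimately have v_int: "(v has_integral u b - u a - c * integral {a..b} F) {a..b}"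
    by (auto dest: has_integral_diff)
  then show "v integrable_on {a..b}" by blast
  from v_int have "integral {a..b} v = u b - u a - c * integral {a..b} F"
    by (rule integral_unique)
  then have "norm c * norm (integral {a..b} F) = norm (u b - u a - integral {a..b} v)"
    by (simp flip: norm_mult)
  also have "\<dots> \<le> norm (u b) + norm (u a) + norm (integral {a..b} v)"
    by (smt (verit) norm_triangle_ineq4)
  finally show "norm (integral {a..b} F) \<le> (norm (u b) + norm (u a) + norm (integral {a..b} v)) / norm c"
    using \<open>c \<noteq> 0\<close> by (simp add: field_simps)
qed

lemma continuous_on_Icc_if_isCont_at_left:
  fixes f :: "real \<Rightarrow> 'a::topological_space"
  assumes "a < b" "\<And>z. z \<in> {a..<b} \<Longrightarrow> isCont f z" "(f \<longlongrightarrow> f b) (at_left b)"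
  shows "continuous_on {a..b} f"
proof (rule continuous_on_IccI)
  show "(f \<longlongrightarrow> f a) (at_right a)"
    using assms(1,2) by (simp add: isCont_def filterlim_at_split)
qed (use assms in \<open>auto simp: isCont_def\<close>)

lemma tendsto_zero_at_left_if_norm_le:
  fixes f :: "real \<Rightarrow> 'a::real_normed_vector"
  assumes "a < b" "\<And>z. z \<in> {a<..<b} \<Longrightarrow> norm (f z) \<le> c z" "isCont c b" "c b = 0"
  shows "(f \<longlongrightarrow> 0) (at_left b)"
proof (rule Lim_null_comparison)
  show "\<forall>\<^sub>F z in at_left b. norm (f z) \<le> c z"
    using eventually_at_left_real[OF \<open>a < b\<close>] by eventually_elim (use assms(2) in auto)
  show "(c \<longlongrightarrow> 0) (at_left b)"
    using assms(3,4) by (metis filterlim_at_split isCont_def)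
qed

lemma integral_Ici_eq_Icc_if_vanishing:
  fixes f :: "real \<Rightarrow> 'a::banach"
  assumes "\<And>x. b < x \<Longrightarrow> f x = 0"
  shows "integral {a..} f = integral {a..b} f"
proof -
  have "integral {a..} f = integral {a..} (\<lambda>x. if x \<in> {a..b} then f x else 0)"
    by (rule integral_cong) (use assms in auto)
  also have "\<dots> = integral ({a..b} \<inter> {a..}) f"
    by (rule integral_restrict_Int)
  also have "{a..b} \<inter> {a..} = {a..b}"
    by auto
  finally show ?thesis .
qed

section \<open>Logarithmic weights\<close>

lemma mult_neg_ln_le_one:
  fixes z :: real
  assumes "0 < z"
  shows "z * - ln z \<le> 1"
proof -
  have "- ln z \<le> 1 / z - 1"
    using ln_le_minus_one[of "1 / z"] assms by (simp add: ln_div)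
  then have "z * - ln z \<le> z * (1 / z - 1)"
    using assms by (intro mult_left_mono) auto
  then show ?thesis
    using assms by (simp add: algebra_simps)
qed

lemma neg_ln_gt_3:
  fixes z :: real
  assumes "0 < z" "z < exp (- 3)"
  shows "3 < - ln z"
  using ln_less_cancel_iff[of z "exp (- 3)"] assms by simp

lemma less_one_if_less_exp_neg_3:
  fixes b :: real
  assumes "b < exp (- 3)"
  shows "b < 1"
proof -
  have "exp (- 3 :: real) < 1"
    by simp
  with assms show ?thesis
    by linarith
qed

lemma has_real_derivative_inverse_ln_squared:
  fixes y :: real
  assumes "0 < y" "y \<noteq> 1"
  shows "((\<lambda>y. inverse ((ln y)\<^sup>2)) has_real_derivative - 2 / (y * (ln y) ^ 3)) (at y)"
  using assms
  by (auto intro!: derivative_eq_intros simp: field_simps power2_eq_square power3_eq_cube)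

lemma deriv_inverse_ln_squared:
  fixes y :: real
  assumes "0 < y" "y \<noteq> 1"
  shows "deriv (\<lambda>y. inverse ((ln y)\<^sup>2)) y = - 2 / (y * (ln y) ^ 3)"
  using has_real_derivative_inverse_ln_squared[OF assms] by (rule DERIV_imp_deriv)

lemma deriv2_inverse_ln_squared:
  fixes y :: real
  assumes "0 < y" "y \<noteq> 1"
  shows "(deriv ^^ 2) (\<lambda>y. inverse ((ln y)\<^sup>2)) y = 2 / (y\<^sup>2 * (ln y) ^ 3) + 6 / (y\<^sup>2 * (ln y) ^ 4)"
proof -
  have "\<forall>\<^sub>F x in nhds y. x \<in> {0<..} - {1}"
    using assms by (intro eventually_nhds_in_open) auto
  then have "\<forall>\<^sub>F x in nhds y. deriv (\<lambda>y. inverse ((ln y)\<^sup>2)) x = - 2 / (x * (ln x) ^ 3)"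
    by eventually_elim (simp add: deriv_inverse_ln_squared)
  then have "(deriv ^^ 2) (\<lambda>y. inverse ((ln y)\<^sup>2)) y = deriv (\<lambda>x. - 2 / (x * (ln x) ^ 3)) y"
    by (simp add: numeral_2_eq_2 deriv_cong_ev)
  moreover have "((\<lambda>x. - 2 / (x * (ln x) ^ 3)) has_real_derivative
      2 / (y\<^sup>2 * (ln y) ^ 3) + 6 / (y\<^sup>2 * (ln y) ^ 4)) (at y)"
    using assms by (auto intro!: derivative_eq_intros simp: field_simps eval_nat_numeral)
  ultimately show ?thesis
    by (simp add: DERIV_imp_deriv)
qed

lemma abs_deriv_inverse_ln_squared:
  fixes z :: real
  assumes "0 < z" "z < 1"
  shows "\<bar>deriv (\<lambda>y. inverse ((ln y)\<^sup>2)) z\<bar> = 2 / (z * (- ln z) ^ 3)"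
  using assms by (simp add: deriv_inverse_ln_squared abs_mult power_minus_odd)

lemma abs_deriv2_inverse_ln_squared_le:
  fixes z :: real
  assumes "0 < z" "3 \<le> - ln z"
  shows "\<bar>(deriv ^^ 2) (\<lambda>y. inverse ((ln y)\<^sup>2)) z\<bar> \<le> 4 / (z\<^sup>2 * (- ln z) ^ 3)"
proof -
  define L where "L = - ln z"
  have "3 \<le> L" "z \<noteq> 1"
    using assms by (auto simp: L_def)
  then have "(deriv ^^ 2) (\<lambda>y. inverse ((ln y)\<^sup>2)) z = - (2 * L - 6) / (z\<^sup>2 * L ^ 4)"
    using assms by (subst deriv2_inverse_ln_squared) (auto simp: L_def field_simps eval_nat_numeral)
  also have "\<bar>\<dots>\<bar> = 4 / (z\<^sup>2 * L ^ 3) * ((2 * L - 6) / (4 * L))"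
    using \<open>3 \<le> L\<close> assms by (simp add: field_simps eval_nat_numeral)
  also have "\<dots> \<le> 4 / (z\<^sup>2 * L ^ 3)"
    using \<open>3 \<le> L\<close> assms by (intro mult_left_le) auto
  finally show ?thesis
    by (simp add: L_def)
qed

lemma has_integral_log_weight:
  fixes a c :: real
  assumes "0 < a" "a \<le> c" "c < 1"
  shows "((\<lambda>z. 2 / (z ^ 3 * (- ln z) ^ 3) - 3 / (z ^ 3 * (- ln z) ^ 4)) has_integral
      1 / (a\<^sup>2 * (- ln a) ^ 3) - 1 / (c\<^sup>2 * (- ln c) ^ 3)) {a..c}"
proof -
  have "((\<lambda>z. - (1 / (z\<^sup>2 * (- ln z) ^ 3))) has_real_derivative
      2 / (x ^ 3 * (- ln x) ^ 3) - 3 / (x ^ 3 * (- ln x) ^ 4)) (at x within {a..c})"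
    if "x \<in> {a..c}" for x
  proof -
    have "0 < x" "x < 1"
      using that assms by auto
    then show ?thesis
      by (auto intro!: derivative_eq_intros simp: field_simps eval_nat_numeral)
  qed
  then show ?thesis
    using fundamental_theorem_of_calculus[OF \<open>a \<le> c\<close>, of "\<lambda>z. - (1 / (z\<^sup>2 * (- ln z) ^ 3))"]
    by (simp add: has_real_derivative_iff_has_vector_derivative)
qed

lemma inverse_cube_le_log_weight:
  fixes z L :: real
  assumes "0 < z" "3 \<le> L"
  shows "1 / (z ^ 3 * L ^ 3) \<le> 2 / (z ^ 3 * L ^ 3) - 3 / (z ^ 3 * L ^ 4)"
proof -
  have "3 / (z ^ 3 * L ^ 4) = 1 / (z ^ 3 * L ^ 3) * (3 / L)"
    using assms by (simp add: field_simps eval_nat_numeral)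
  also have "\<dots> \<le> 1 / (z ^ 3 * L ^ 3)"
    using assms by (intro mult_left_le) auto
  finally show ?thesis
    by simp
qed

section \<open>Oscillatory integrals with logarithmically decaying amplitude\<close>

definition phase :: "real \<Rightarrow> real \<Rightarrow> real \<Rightarrow> complex" where
  "phase m t z = exp (- \<i> * complex_of_real (t * sqrt (z\<^sup>2 + m\<^sup>2)))"

lemma norm_phase [simp]: "norm (phase m t z) = 1"
  by (simp add: phase_def)

lemma has_vector_derivative_phase:
  assumes "0 < m"
  shows "(phase m t has_vector_derivative
      - (\<i> * of_real t) * of_real (z / sqrt (z\<^sup>2 + m\<^sup>2)) * phase m t z) (at z)"
proof -
  have "0 < z\<^sup>2 + m\<^sup>2"
    using assms by (simp add: add_nonneg_pos)
  then have "((\<lambda>z. t * sqrt (z\<^sup>2 + m\<^sup>2)) has_real_derivative t * (z / sqrt (z\<^sup>2 + m\<^sup>2))) (at z)"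
    by (auto intro!: derivative_eq_intros simp: field_simps)
  then have inner: "((\<lambda>z. complex_of_real (t * sqrt (z\<^sup>2 + m\<^sup>2))) has_vector_derivative
      of_real (t * (z / sqrt (z\<^sup>2 + m\<^sup>2)))) (at z)"
    by (rule has_vector_derivative_of_real)
  have outer: "((\<lambda>u. exp (- \<i> * u)) has_field_derivative
      - \<i> * exp (- \<i> * complex_of_real (t * sqrt (z\<^sup>2 + m\<^sup>2)))) (at (of_real (t * sqrt (z\<^sup>2 + m\<^sup>2))))"
    by (auto intro!: derivative_eq_intros)
  show ?thesis
    using field_vector_diff_chain_at[OF inner outer] by (simp add: phase_def [abs_def] o_def algebra_simps)
qed

lemma has_real_derivative_sqrt_sum_squares_div:
  fixes m z :: real
  assumes "0 < m" "0 < z"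
  shows "((\<lambda>z. sqrt (z\<^sup>2 + m\<^sup>2) / z) has_real_derivative - m\<^sup>2 / (sqrt (z\<^sup>2 + m\<^sup>2) * z\<^sup>2)) (at z)"
proof -
  have "0 < z\<^sup>2 + m\<^sup>2"
    using assms by (simp add: add_nonneg_pos)
  then show ?thesis
    using assms by (auto intro!: derivative_eq_intros simp: field_simps power2_eq_square real_sqrt_mult [symmetric])
qed

locale log_amplitude =
  fixes b m A :: real and g g' g'' :: "real \<Rightarrow> complex"
  assumes b_pos: "0 < b" and b_less: "b < exp (- 3)" and m_pos: "0 < m"
    and g_deriv: "\<And>z. z \<in> {0<..<b} \<Longrightarrow> (g has_vector_derivative g' z) (at z)"
    and g'_deriv: "\<And>z. z \<in> {0<..<b} \<Longrightarrow> (g' has_vector_derivative g'' z) (at z)"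
    and norm_g_le: "\<And>z. z \<in> {0<..<b} \<Longrightarrow> norm (g z) \<le> A / (ln z)\<^sup>2"
    and norm_g'_le: "\<And>z. z \<in> {0<..<b} \<Longrightarrow> norm (g' z) \<le> A / (z * (- ln z) ^ 3)"
    and norm_g''_le: "\<And>z. z \<in> {0<..<b} \<Longrightarrow> norm (g'' z) \<le> A / (z\<^sup>2 * (- ln z) ^ 3)"
    and g_at_b: "g b = 0" "(g \<longlongrightarrow> 0) (at_left b)"
    and g'_at_b: "g' b = 0" "(g' \<longlongrightarrow> 0) (at_left b)"
begin

definition integrand :: "real \<Rightarrow> real \<Rightarrow> complex" where
  "integrand t z = phase m t z * of_real (z / sqrt (z\<^sup>2 + m\<^sup>2)) * g z"

lemma mem_imp_neg_ln_gt_3: "z \<in> {0<..<b} \<Longrightarrow> 3 < - ln z"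
  using neg_ln_gt_3 b_less by auto

lemma b_less_one: "b < 1"
  using b_less by (rule less_one_if_less_exp_neg_3)

lemma A_nonneg: "0 \<le> A"
proof -
  have mem: "b / 2 \<in> {0<..<b}"
    using b_pos by auto
  then have "0 \<le> A / (ln (b / 2))\<^sup>2"
    using norm_g_le[OF mem] norm_ge_zero order_trans by blast
  moreover have "ln (b / 2) \<noteq> 0"
    using mem_imp_neg_ln_gt_3[OF mem] by linarith
  ultimately show ?thesis
    by (simp add: zero_le_divide_iff)
qed

lemma A_div_ln_squared_le:
  assumes "z \<in> {0<..<b}"
  shows "A / (ln z)\<^sup>2 \<le> A"
proof -
  have "1 \<le> (- ln z)\<^sup>2"
    using mem_imp_neg_ln_gt_3[OF assms] by (intro one_le_power) linarith
  then have "A / (ln z)\<^sup>2 \<le> A / 1"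
    using A_nonneg by (intro divide_left_mono) auto
  then show ?thesis
    by simp
qed

lemma sqrt_sum_squares_bounds:
  "m \<le> sqrt (z\<^sup>2 + m\<^sup>2)" "z \<le> sqrt (z\<^sup>2 + m\<^sup>2)" "0 < sqrt (z\<^sup>2 + m\<^sup>2)"
  "0 \<le> z \<Longrightarrow> z \<le> 1 \<Longrightarrow> sqrt (z\<^sup>2 + m\<^sup>2) \<le> 1 + m"
proof -
  show "m \<le> sqrt (z\<^sup>2 + m\<^sup>2)" "z \<le> sqrt (z\<^sup>2 + m\<^sup>2)"
    by simp_all
  then show "0 < sqrt (z\<^sup>2 + m\<^sup>2)"
    using m_pos by linarith
  show "sqrt (z\<^sup>2 + m\<^sup>2) \<le> 1 + m" if "0 \<le> z" "z \<le> 1"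
    using sqrt_sum_squares_le_sum_abs[of z m] that m_pos by simp
qed

lemma norm_integrand:
  "0 \<le> z \<Longrightarrow> norm (integrand t z) = z / sqrt (z\<^sup>2 + m\<^sup>2) * norm (g z)"
  using sqrt_sum_squares_bounds(3)[of z]
  unfolding integrand_def norm_mult norm_of_real norm_phase by simp

lemma norm_integrand_le:
  assumes "z \<in> {0<..<b}"
  shows "norm (integrand t z) \<le> z / m * (A / (ln z)\<^sup>2)" "norm (integrand t z) \<le> norm (g z)"
proof -
  have norm_eq: "norm (integrand t z) = z / sqrt (z\<^sup>2 + m\<^sup>2) * norm (g z)"
    using assms by (simp add: norm_integrand)
  have "z / sqrt (z\<^sup>2 + m\<^sup>2) \<le> z / m"
    using assms m_pos sqrt_sum_squares_bounds(1,3) by (intro divide_left_mono) auto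
  then show "norm (integrand t z) \<le> z / m * (A / (ln z)\<^sup>2)"
    unfolding norm_eq using assms m_pos by (intro mult_mono norm_g_le) auto
  have "z / sqrt (z\<^sup>2 + m\<^sup>2) \<le> 1"
    using sqrt_sum_squares_bounds(2,3) by (simp add: divide_le_eq)
  then show "norm (integrand t z) \<le> norm (g z)"
    unfolding norm_eq using assms sqrt_sum_squares_bounds(3) by (intro mult_left_le_one_le) auto
qed

lemma isCont_integrand: "z \<in> {0<..<b} \<Longrightarrow> isCont (integrand t) z"
  using has_vector_derivative_continuous[OF has_vector_derivative_phase[OF m_pos]]
    has_vector_derivative_continuous[OF g_deriv] sqrt_sum_squares_bounds(3)[of z]
  unfolding integrand_def by (intro continuous_intros) auto

lemma continuous_on_integrand: "continuous_on {0..b} (integrand t)"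
proof (rule continuous_on_IccI)
  have bound: "norm (integrand t z) \<le> z / m * A" if "z \<in> {0<..<b}" for z
  proof -
    have "z / m * (A / (ln z)\<^sup>2) \<le> z / m * A"
      using that m_pos A_div_ln_squared_le[OF that] by (intro mult_left_mono) auto
    then show ?thesis
      by (rule order_trans[OF norm_integrand_le(1)[OF that]])
  qed
  have "\<forall>\<^sub>F z in at_right 0. norm (integrand t z) \<le> z / m * A"
    using eventually_at_right_real[OF b_pos] by eventually_elim (rule bound)
  moreover have "((\<lambda>z. z / m * A) \<longlongrightarrow> 0) (at_right 0)"
    using m_pos by (auto intro!: tendsto_eq_intros)
  ultimately have "(integrand t \<longlongrightarrow> 0) (at_right 0)"
    by (rule Lim_null_comparison)
  then show "(integrand t \<longlongrightarrow> integrand t 0) (at_right 0)"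
    by (simp add: integrand_def)
  have "\<forall>\<^sub>F z in at_left b. norm (integrand t z) \<le> norm (g z)"
    using eventually_at_left_real[OF b_pos] by eventually_elim (rule norm_integrand_le(2))
  moreover have "((\<lambda>z. norm (g z)) \<longlongrightarrow> 0) (at_left b)"
    using g_at_b(2) by (simp add: tendsto_norm_zero_iff)
  ultimately have "(integrand t \<longlongrightarrow> 0) (at_left b)"
    by (rule Lim_null_comparison)
  then show "(integrand t \<longlongrightarrow> integrand t b) (at_left b)"
    by (simp add: integrand_def g_at_b(1))
qed (use isCont_integrand b_pos in \<open>auto simp: isCont_def\<close>)

lemma integrable_integrand: "{c..d} \<subseteq> {0..b} \<Longrightarrow> integrand t integrable_on {c..d}"
  using integrable_continuous_interval continuous_on_integrand integrable_on_subinterval by blast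

lemma norm_integral_near_zero_le:
  assumes "0 < \<delta>" "\<delta> < b"
  shows "norm (integral {0..\<delta>} (integrand t)) \<le> A / m * \<delta>\<^sup>2 / (ln \<delta>)\<^sup>2"
proof -
  have "norm (integrand t z) \<le> \<delta> / m * (A / (ln \<delta>)\<^sup>2)" if "z \<in> {0..\<delta>}" for z
  proof (cases "z = 0")
    case True
    then show ?thesis
      using assms A_nonneg m_pos by (simp add: integrand_def)
  next
    case False
    then have z: "z \<in> {0<..<b}"
      using that assms by auto
    have "- ln \<delta> \<le> - ln z" "0 < - ln \<delta>"
      using that z assms b_less_one mem_imp_neg_ln_gt_3[of \<delta>] by auto
    then have "(ln \<delta>)\<^sup>2 \<le> (ln z)\<^sup>2" "0 < (ln \<delta>)\<^sup>2" "0 < (ln z)\<^sup>2"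
      by (metis power2_minus power_mono less_imp_le, simp_all)
    then have "A / (ln z)\<^sup>2 \<le> A / (ln \<delta>)\<^sup>2"
      using A_nonneg by (intro divide_left_mono) auto
    moreover have "z / m \<le> \<delta> / m"
      using that m_pos by (simp add: divide_right_mono)
    ultimately have "z / m * (A / (ln z)\<^sup>2) \<le> \<delta> / m * (A / (ln \<delta>)\<^sup>2)"
      using A_nonneg z m_pos assms by (intro mult_mono) auto
    then show ?thesis
      by (rule order_trans[OF norm_integrand_le(1)[OF z]])
  qed
  then have "norm (integral {0..\<delta>} (integrand t)) \<le> \<delta> / m * (A / (ln \<delta>)\<^sup>2) * (\<delta> - 0)"
    using assms by (intro integral_bound continuous_on_subset[OF continuous_on_integrand]) auto
  then show ?thesis
    by (simp add: power2_eq_square mult_ac)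
qed

lemma norm_integral_integrand_le: "norm (integral {0..b} (integrand t)) \<le> A * b"
proof -
  have "norm (integrand t z) \<le> A" if "z \<in> {0..b}" for z
  proof (cases "z \<in> {0<..<b}")
    case True
    then show ?thesis
      using norm_integrand_le(2) norm_g_le A_div_ln_squared_le order_trans by metis
  next
    case False
    then have "z = 0 \<or> z = b"
      using that by auto
    then show ?thesis
      using A_nonneg by (auto simp: integrand_def g_at_b(1))
  qed
  then show ?thesis
    using b_pos integral_bound[OF _ continuous_on_integrand] by fastforce
qed

lemma has_vector_derivative_phase_mult_g:
  assumes "z \<in> {0<..<b}"
  shows "((\<lambda>z. phase m t z * g z) has_vector_derivative
      - (\<i> * of_real t) * integrand t z + phase m t z * g' z) (at z)"
  by (rule has_vector_derivative_eq_rhs[OF has_vector_derivative_mult[OF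
        has_vector_derivative_phase[OF m_pos] g_deriv[OF assms]]])
    (simp add: integrand_def algebra_simps)

text \<open>
  Since the phase has derivative \<open>- (\<i> t) (z / \<phi>) phase\<close>, the product \<open>phase * g'\<close> is again of
  the form (derivative of the phase) times \<open>rescaled_g' / (- \<i> t)\<close>; this sets up the second
  integration by parts.
\<close>

definition rescaled_g' :: "real \<Rightarrow> complex" where
  "rescaled_g' z = of_real (sqrt (z\<^sup>2 + m\<^sup>2) / z) * g' z"

definition rescaled_g'_deriv :: "real \<Rightarrow> complex" where
  "rescaled_g'_deriv z = of_real (sqrt (z\<^sup>2 + m\<^sup>2) / z) * g'' z
     - of_real (m\<^sup>2 / (sqrt (z\<^sup>2 + m\<^sup>2) * z\<^sup>2)) * g' z"

lemma has_vector_derivative_rescaled_g':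
  assumes "z \<in> {0<..<b}"
  shows "(rescaled_g' has_vector_derivative rescaled_g'_deriv z) (at z)"
proof -
  have "((\<lambda>z. of_real (sqrt (z\<^sup>2 + m\<^sup>2) / z) * g' z) has_vector_derivative rescaled_g'_deriv z) (at z)"
    using assms
    by (intro has_vector_derivative_eq_rhs[OF has_vector_derivative_mult[OF has_vector_derivative_of_real[OF
          has_real_derivative_sqrt_sum_squares_div[OF m_pos]] g'_deriv]])
      (auto simp: rescaled_g'_deriv_def algebra_simps)
  then show ?thesis
    unfolding rescaled_g'_def [abs_def] .
qed

lemma has_vector_derivative_phase_mult_rescaled_g':
  assumes "z \<in> {0<..<b}"
  shows "((\<lambda>z. phase m t z * rescaled_g' z) has_vector_derivative
      - (\<i> * of_real t) * (phase m t z * g' z) + phase m t z * rescaled_g'_deriv z) (at z)"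
proof -
  have "of_real (z / sqrt (z\<^sup>2 + m\<^sup>2)) * of_real (sqrt (z\<^sup>2 + m\<^sup>2) / z) = (1 :: complex)"
    using assms sqrt_sum_squares_bounds(3)[of z] by (simp flip: of_real_mult)
  then have g'_eq: "g' z = of_real (z / sqrt (z\<^sup>2 + m\<^sup>2)) * rescaled_g' z"
    unfolding rescaled_g'_def mult.assoc [symmetric] by simp
  show ?thesis
    by (rule has_vector_derivative_eq_rhs[OF has_vector_derivative_mult[OF
          has_vector_derivative_phase[OF m_pos] has_vector_derivative_rescaled_g'[OF assms]]])
      (simp add: g'_eq algebra_simps)
qed

lemma norm_rescaled_g'_le:
  assumes "z \<in> {0<..<b}"
  shows "norm (rescaled_g' z) \<le> (1 + m) * A / (z\<^sup>2 * (- ln z) ^ 3)"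
proof -
  have z: "0 < z" "z < 1" "0 < - ln z"
    using assms b_less_one mem_imp_neg_ln_gt_3[OF assms] by auto
  have "norm (rescaled_g' z) = sqrt (z\<^sup>2 + m\<^sup>2) / z * norm (g' z)"
    using z sqrt_sum_squares_bounds(3)[of z] unfolding rescaled_g'_def norm_mult norm_of_real by simp
  also have "\<dots> \<le> (1 + m) / z * (A / (z * (- ln z) ^ 3))"
    using z m_pos sqrt_sum_squares_bounds(3,4)[of z] norm_g'_le[OF assms]
    by (intro mult_mono divide_right_mono) auto
  also have "\<dots> = (1 + m) * A / (z\<^sup>2 * (- ln z) ^ 3)"
    using z by (simp add: field_simps power2_eq_square)
  finally show ?thesis .
qed

lemma norm_rescaled_g'_deriv_le:
  assumes "z \<in> {0<..<b}"
  shows "norm (rescaled_g'_deriv z) \<le> (1 + 2 * m) * A / (z ^ 3 * (- ln z) ^ 3)"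
proof -
  define L where "L = - ln z"
  have z: "0 < z" "z < 1" "0 < L"
    using assms b_less_one mem_imp_neg_ln_gt_3[OF assms] by (auto simp: L_def)
  have "m\<^sup>2 / sqrt (z\<^sup>2 + m\<^sup>2) \<le> m"
    using m_pos sqrt_sum_squares_bounds(1,3)[of z] by (simp add: divide_le_eq power2_eq_square mult_left_mono)
  then have "m\<^sup>2 / sqrt (z\<^sup>2 + m\<^sup>2) / z\<^sup>2 \<le> m / z\<^sup>2"
    by (intro divide_right_mono) auto
  then have "m\<^sup>2 / (sqrt (z\<^sup>2 + m\<^sup>2) * z\<^sup>2) * norm (g' z) \<le> m / z\<^sup>2 * (A / (z * L ^ 3))"
    using z m_pos norm_g'_le[OF assms] by (intro mult_mono) (auto simp: L_def divide_divide_eq_left)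
  moreover have "sqrt (z\<^sup>2 + m\<^sup>2) / z * norm (g'' z) \<le> (1 + m) / z * (A / (z\<^sup>2 * L ^ 3))"
    using z m_pos sqrt_sum_squares_bounds(3,4)[of z] norm_g''_le[OF assms]
    by (intro mult_mono divide_right_mono) (auto simp: L_def)
  moreover have "norm (rescaled_g'_deriv z) \<le> norm (of_real (sqrt (z\<^sup>2 + m\<^sup>2) / z) * g'' z)
      + norm (of_real (m\<^sup>2 / (sqrt (z\<^sup>2 + m\<^sup>2) * z\<^sup>2)) * g' z)"
    unfolding rescaled_g'_deriv_def by (rule norm_triangle_ineq4)
  moreover have "norm (of_real (sqrt (z\<^sup>2 + m\<^sup>2) / z) * g'' z) = sqrt (z\<^sup>2 + m\<^sup>2) / z * norm (g'' z)"
      "norm (of_real (m\<^sup>2 / (sqrt (z\<^sup>2 + m\<^sup>2) * z\<^sup>2)) * g' z) = m\<^sup>2 / (sqrt (z\<^sup>2 + m\<^sup>2) * z\<^sup>2) * norm (g' z)"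
    using z sqrt_sum_squares_bounds(3)[of z] unfolding norm_mult norm_of_real by simp_all
  ultimately have "norm (rescaled_g'_deriv z) \<le> (1 + m) / z * (A / (z\<^sup>2 * L ^ 3)) + m / z\<^sup>2 * (A / (z * L ^ 3))"
    by linarith
  also have "\<dots> = (1 + 2 * m) * A / (z ^ 3 * L ^ 3)"
    using z by (simp add: field_simps eval_nat_numeral)
  finally show ?thesis
    by (simp add: L_def)
qed

lemma continuous_on_phase_mult:
  assumes "0 < \<delta>" "\<delta> < b" "\<And>z. z \<in> {0<..<b} \<Longrightarrow> isCont f z" "(f \<longlongrightarrow> 0) (at_left b)" "f b = 0"
  shows "continuous_on {\<delta>..b} (\<lambda>z. phase m t z * f z)"
proof (rule continuous_on_Icc_if_isCont_at_left)
  have "isCont (phase m t) z" for z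
    using has_vector_derivative_phase[OF m_pos] by (rule has_vector_derivative_continuous)
  then show "isCont (\<lambda>z. phase m t z * f z) z" if "z \<in> {\<delta>..<b}" for z
    using that assms(1,3) by (intro continuous_intros) auto
  then have "(phase m t \<longlongrightarrow> phase m t b) (at_left b)"
    using \<open>\<And>z. isCont (phase m t) z\<close> by (simp add: isCont_def filterlim_at_split)
  then show "((\<lambda>z. phase m t z * f z) \<longlongrightarrow> phase m t b * f b) (at_left b)"
    using assms(4,5) by (auto intro: tendsto_eq_intros)
qed (use assms in auto)

lemma continuous_on_phase_mult_g: "0 < \<delta> \<Longrightarrow> \<delta> < b \<Longrightarrow> continuous_on {\<delta>..b} (\<lambda>z. phase m t z * g z)"
  using has_vector_derivative_continuous[OF g_deriv] g_at_b by (intro continuous_on_phase_mult) auto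

lemma continuous_on_phase_mult_g': "0 < \<delta> \<Longrightarrow> \<delta> < b \<Longrightarrow> continuous_on {\<delta>..b} (\<lambda>z. phase m t z * g' z)"
  using has_vector_derivative_continuous[OF g'_deriv] g'_at_b by (intro continuous_on_phase_mult) auto

lemma rescaled_g'_at_b: "rescaled_g' b = 0"
  by (simp add: rescaled_g'_def g'_at_b(1))

lemma continuous_on_phase_mult_rescaled_g':
  assumes "0 < \<delta>" "\<delta> < b"
  shows "continuous_on {\<delta>..b} (\<lambda>z. phase m t z * rescaled_g' z)"
proof -
  have "((\<lambda>z. of_real (sqrt (z\<^sup>2 + m\<^sup>2) / z) * g' z) \<longlongrightarrow> of_real (sqrt (b\<^sup>2 + m\<^sup>2) / b) * 0) (at_left b)"
    using g'_at_b(2) b_pos by (intro tendsto_intros) auto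
  then have "(rescaled_g' \<longlongrightarrow> 0) (at_left b)"
    by (simp add: rescaled_g'_def [abs_def])
  then show ?thesis
    using assms has_vector_derivative_continuous[OF has_vector_derivative_rescaled_g'] rescaled_g'_at_b
    by (intro continuous_on_phase_mult) auto
qed

lemma norm_integral_phase_mult_rescaled_g'_deriv_le:
  assumes "0 < \<delta>" "\<delta> < b"
    and int: "(\<lambda>z. phase m t z * rescaled_g'_deriv z) integrable_on {\<delta>..b}"
  shows "norm (integral {\<delta>..b} (\<lambda>z. phase m t z * rescaled_g'_deriv z))
    \<le> (1 + 2 * m) * A / (\<delta>\<^sup>2 * (- ln \<delta>) ^ 3)"
proof -
  define K where "K = (1 + 2 * m) * A"
  define W where "W z = 2 / (z ^ 3 * (- ln z) ^ 3) - 3 / (z ^ 3 * (- ln z) ^ 4)" for z :: real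
  have K_nonneg: "0 \<le> K"
    using m_pos A_nonneg by (simp add: K_def)
  have W_int: "((\<lambda>z. K * W z) has_integral K * (1 / (\<delta>\<^sup>2 * (- ln \<delta>) ^ 3) - 1 / (b\<^sup>2 * (- ln b) ^ 3))) {\<delta><..<b}"
    using has_integral_mult_right[OF has_integral_log_weight[OF \<open>0 < \<delta>\<close> _ b_less_one], of K] assms
    by (simp add: W_def has_integral_Icc_iff_Ioo)
  have "norm (phase m t z * rescaled_g'_deriv z) \<le> K * W z" if "z \<in> {\<delta><..<b}" for z
  proof -
    have z: "z \<in> {0<..<b}"
      using that assms by auto
    have "norm (phase m t z * rescaled_g'_deriv z) \<le> K * (1 / (z ^ 3 * (- ln z) ^ 3))"
      using norm_rescaled_g'_deriv_le[OF z] by (simp add: norm_mult K_def)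
    also have "\<dots> \<le> K * W z"
      unfolding W_def using z mem_imp_neg_ln_gt_3[OF z] K_nonneg
      by (intro mult_left_mono inverse_cube_le_log_weight) auto
    finally show ?thesis .
  qed
  then have "norm (integral {\<delta><..<b} (\<lambda>z. phase m t z * rescaled_g'_deriv z)) \<le> integral {\<delta><..<b} (\<lambda>z. K * W z)"
    using int W_int by (intro integral_norm_bound_integral) (auto simp: integrable_on_open_interval_real)
  also have "\<dots> = K * (1 / (\<delta>\<^sup>2 * (- ln \<delta>) ^ 3) - 1 / (b\<^sup>2 * (- ln b) ^ 3))"
    using W_int by (rule integral_unique)
  also have "\<dots> \<le> K * (1 / (\<delta>\<^sup>2 * (- ln \<delta>) ^ 3))"
  proof -
    have "0 \<le> 1 / (b\<^sup>2 * (- ln b) ^ 3)"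
      using b_pos b_less_one by (intro divide_nonneg_pos mult_pos_pos zero_less_power) auto
    then show ?thesis
      using K_nonneg by (intro mult_left_mono) auto
  qed
  finally show ?thesis
    by (simp add: integral_open_interval_real K_def)
qed

lemma norm_integral_phase_mult_g'_le:
  assumes "0 < \<delta>" "\<delta> < b" "0 < t"
  shows "norm (integral {\<delta>..b} (\<lambda>z. phase m t z * g' z)) \<le> (2 + 3 * m) * A / (t * \<delta>\<^sup>2 * (- ln \<delta>) ^ 3)"
proof -
  have int: "(\<lambda>z. phase m t z * g' z) integrable_on {\<delta>..b}"
    using continuous_on_phase_mult_g'[OF assms(1,2)] by (rule integrable_continuous_interval)
  have deriv: "((\<lambda>z. phase m t z * rescaled_g' z) has_vector_derivative
      - (\<i> * of_real t) * (phase m t z * g' z) + phase m t z * rescaled_g'_deriv z) (at z)"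
    if "z \<in> {\<delta><..<b}" for z
    using that assms by (intro has_vector_derivative_phase_mult_rescaled_g') auto
  note by_parts = norm_integral_le_by_parts[OF _ _ continuous_on_phase_mult_rescaled_g'[OF assms(1,2)] deriv int]
  have "norm (integral {\<delta>..b} (\<lambda>z. phase m t z * g' z))
      \<le> (norm (phase m t b * rescaled_g' b) + norm (phase m t \<delta> * rescaled_g' \<delta>)
          + norm (integral {\<delta>..b} (\<lambda>z. phase m t z * rescaled_g'_deriv z))) / norm (- (\<i> * of_real t))"
    using assms by (intro by_parts(2)) auto
  also have "\<dots> = (norm (rescaled_g' \<delta>) + norm (integral {\<delta>..b} (\<lambda>z. phase m t z * rescaled_g'_deriv z))) / t"
    using assms by (simp add: norm_mult rescaled_g'_at_b)
  also have "\<dots> \<le> ((1 + m) * A / (\<delta>\<^sup>2 * (- ln \<delta>) ^ 3) + (1 + 2 * m) * A / (\<delta>\<^sup>2 * (- ln \<delta>) ^ 3)) / t"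
    using assms by (intro divide_right_mono add_mono norm_rescaled_g'_le
        norm_integral_phase_mult_rescaled_g'_deriv_le by_parts(1)) auto
  also have "\<dots> = (2 + 3 * m) * A / (t * \<delta>\<^sup>2 * (- ln \<delta>) ^ 3)"
    using assms b_less_one by (simp add: field_simps)
  finally show ?thesis .
qed

lemma norm_integral_away_from_zero_le:
  assumes "0 < \<delta>" "\<delta> < b" "0 < t"
  shows "norm (integral {\<delta>..b} (integrand t))
    \<le> (A / (ln \<delta>)\<^sup>2 + (2 + 3 * m) * A / (t * \<delta>\<^sup>2 * (- ln \<delta>) ^ 3)) / t"
proof -
  have deriv: "((\<lambda>z. phase m t z * g z) has_vector_derivative
      - (\<i> * of_real t) * integrand t z + phase m t z * g' z) (at z)" if "z \<in> {\<delta><..<b}" for z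
    using that assms by (intro has_vector_derivative_phase_mult_g) auto
  have int: "integrand t integrable_on {\<delta>..b}"
    using assms by (intro integrable_integrand) auto
  note by_parts = norm_integral_le_by_parts[OF _ _ continuous_on_phase_mult_g[OF assms(1,2)] deriv int]
  have "norm (integral {\<delta>..b} (integrand t))
      \<le> (norm (phase m t b * g b) + norm (phase m t \<delta> * g \<delta>)
          + norm (integral {\<delta>..b} (\<lambda>z. phase m t z * g' z))) / norm (- (\<i> * of_real t))"
    using assms by (intro by_parts(2)) auto
  also have "\<dots> = (norm (g \<delta>) + norm (integral {\<delta>..b} (\<lambda>z. phase m t z * g' z))) / t"
    using assms by (simp add: norm_mult g_at_b(1))
  also have "\<dots> \<le> (A / (ln \<delta>)\<^sup>2 + (2 + 3 * m) * A / (t * \<delta>\<^sup>2 * (- ln \<delta>) ^ 3)) / t"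
    using assms by (intro divide_right_mono add_mono norm_g_le norm_integral_phase_mult_g'_le) auto
  finally show ?thesis .
qed

lemma one_less_inverse_b_squared: "1 < 1 / b\<^sup>2"
  using b_pos b_less_one power_less_one_iff[of b 2] by simp

text \<open>For large \<open>t\<close> the integral is split at \<open>\<delta> = t\<^sup>-\<^sup>1\<^sup>/\<^sup>2\<close>, where \<open>- ln \<delta> = (ln t) / 2\<close>.\<close>

lemma norm_integral_large_t_le:
  assumes "1 / b\<^sup>2 < t"
  shows "norm (integral {0..b} (integrand t)) \<le> 4 * (A / m + 3 * (1 + m) * A) / (t * (ln t)\<^sup>2)"
proof -
  define \<delta> where "\<delta> = 1 / sqrt t"
  define L where "L = - ln \<delta>"
  have t: "1 < t"
    using assms one_less_inverse_b_squared by linarith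
  have "1 / b < sqrt t"
    using real_sqrt_less_mono[OF assms] b_pos by (simp add: real_sqrt_divide)
  then have \<delta>: "0 < \<delta>" "\<delta> < b"
    using t b_pos by (auto simp: \<delta>_def divide_less_eq mult.commute)
  have \<delta>_sq: "\<delta>\<^sup>2 = 1 / t"
    using t by (simp add: \<delta>_def power_divide)
  have L_eq: "L = ln t / 2"
    using t by (simp add: L_def \<delta>_def ln_div ln_sqrt)
  have L: "3 < L"
    using mem_imp_neg_ln_gt_3 \<delta> by (simp add: L_def)
  have "integral {0..b} (integrand t) = integral {0..\<delta>} (integrand t) + integral {\<delta>..b} (integrand t)"
    using \<delta> by (intro Henstock_Kurzweil_Integration.integral_combine [symmetric] integrable_integrand) auto
  then have "norm (integral {0..b} (integrand t))
      \<le> norm (integral {0..\<delta>} (integrand t)) + norm (integral {\<delta>..b} (integrand t))"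
    by (simp add: norm_triangle_ineq)
  also have "\<dots> \<le> A / m * \<delta>\<^sup>2 / (ln \<delta>)\<^sup>2
      + (A / (ln \<delta>)\<^sup>2 + (2 + 3 * m) * A / (t * \<delta>\<^sup>2 * (- ln \<delta>) ^ 3)) / t"
    using \<delta> t by (intro add_mono norm_integral_near_zero_le norm_integral_away_from_zero_le) auto
  also have "\<dots> = A / m / (t * L\<^sup>2) + (A / L\<^sup>2 + (2 + 3 * m) * A / L ^ 3) / t"
    using t by (simp add: L_def \<delta>_sq)
  also have "\<dots> \<le> A / m / (t * L\<^sup>2) + (A / L\<^sup>2 + (2 + 3 * m) * A / L\<^sup>2) / t"
    using t L m_pos A_nonneg
    by (intro add_mono divide_right_mono divide_left_mono order_refl power_increasing) auto
  also have "\<dots> = 4 * (A / m + 3 * (1 + m) * A) / (t * (ln t)\<^sup>2)"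
    using t L m_pos unfolding L_eq by (simp add: field_simps)
  finally show ?thesis .
qed

theorem norm_integral_decay:
  "\<exists>C. \<forall>t>2. norm (integral {0..b} (\<lambda>z. phase m t z * of_real (z / sqrt (z\<^sup>2 + m\<^sup>2)) * g z))
    \<le> C / (t * (ln t)\<^sup>2)"
proof -
  define K where "K = 4 * (A / m + 3 * (1 + m) * A)"
  define T where "T = 1 / b\<^sup>2"
  have K: "0 \<le> K" and bound: "0 \<le> A * b * (T * (ln T)\<^sup>2)"
    using m_pos A_nonneg b_pos by (auto simp: K_def T_def)
  have "norm (integral {0..b} (integrand t)) \<le> (K + A * b * (T * (ln T)\<^sup>2)) / (t * (ln t)\<^sup>2)"
    if t: "2 < t" for t
  proof (cases "T < t")
    case True
    then have "norm (integral {0..b} (integrand t)) \<le> K / (t * (ln t)\<^sup>2)"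
      using norm_integral_large_t_le by (simp add: K_def T_def)
    also have "\<dots> \<le> (K + A * b * (T * (ln T)\<^sup>2)) / (t * (ln t)\<^sup>2)"
      using t bound by (intro divide_right_mono) auto
    finally show ?thesis .
  next
    case False
    have "t * (ln t)\<^sup>2 \<le> T * (ln T)\<^sup>2"
      using t False by (intro mult_mono power_mono) auto
    then have "A * b \<le> A * b * (T * (ln T)\<^sup>2) / (t * (ln t)\<^sup>2)"
      using t A_nonneg b_pos by (simp add: le_divide_eq mult_left_mono)
    also have "\<dots> \<le> (K + A * b * (T * (ln T)\<^sup>2)) / (t * (ln t)\<^sup>2)"
      using t K by (intro divide_right_mono) auto
    finally show ?thesis
      using norm_integral_integrand_le order_trans by blast
  qed
  then show ?thesis
    unfolding integrand_def [abs_def] by blast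
qed

end

section \<open>Cutoff times the error term\<close>

lemma log_weights_mono:
  fixes z C :: real
  assumes "0 < z" "z < 1" "0 \<le> C"
  shows "C / (ln z)\<^sup>2 \<le> C / (z * (- ln z) ^ 3)" "C / (z * (- ln z) ^ 3) \<le> C / (z\<^sup>2 * (- ln z) ^ 3)"
proof -
  define L where "L = - ln z"
  have L: "0 < L" "z * L \<le> 1"
    using assms mult_neg_ln_le_one[of z] by (auto simp: L_def)
  have "C / L\<^sup>2 = C / (z * L ^ 3) * (z * L)"
    using assms L by (simp add: field_simps eval_nat_numeral)
  also have "\<dots> \<le> C / (z * L ^ 3)"
    using assms L by (intro mult_left_le) auto
  finally show "C / (ln z)\<^sup>2 \<le> C / (z * (- ln z) ^ 3)"
    by (simp add: L_def)
  have "C / (z * L ^ 3) = C / (z\<^sup>2 * L ^ 3) * z"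
    using assms L by (simp add: field_simps power2_eq_square)
  also have "\<dots> \<le> C / (z\<^sup>2 * L ^ 3)"
    using assms L by (intro mult_left_le) auto
  finally show "C / (z * (- ln z) ^ 3) \<le> C / (z\<^sup>2 * (- ln z) ^ 3)"
    by (simp add: L_def)
qed

lemma norm_cutoff_product_le:
  fixes M W0 W1 W2 c c' c'' :: real and e e' e'' :: complex
  assumes c: "\<bar>c\<bar> \<le> M" "\<bar>c'\<bar> \<le> M" "\<bar>c''\<bar> \<le> M"
    and W: "0 \<le> W0" "W0 \<le> W1" "W1 \<le> W2"
    and e: "norm e \<le> W0" "norm e' \<le> 2 * W1" "norm e'' \<le> 4 * W2"
  shows "norm (of_real c * e) \<le> 9 * (M * W0)"
    and "norm (of_real c * e' + of_real c' * e) \<le> 9 * (M * W1)"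
    and "norm (of_real c * e'' + 2 * (of_real c' * e') + of_real c'' * e) \<le> 9 * (M * W2)"
proof -
  have M: "0 \<le> M"
    using c(1) by linarith
  then have MW: "0 \<le> M * W0" "M * W0 \<le> M * W1" "M * W1 \<le> M * W2"
    using W by (auto intro: mult_left_mono)
  have n0: "norm (of_real x * e) \<le> M * W0" if "\<bar>x\<bar> \<le> M" for x
    using mult_mono[OF that e(1) M norm_ge_zero] by (simp add: norm_mult)
  have n1: "norm (of_real x * e') \<le> 2 * (M * W1)" if "\<bar>x\<bar> \<le> M" for x
    using mult_mono[OF that e(2) M norm_ge_zero] by (simp add: norm_mult mult.left_commute)
  have n2: "norm (of_real x * e'') \<le> 4 * (M * W2)" if "\<bar>x\<bar> \<le> M" for x
    using mult_mono[OF that e(3) M norm_ge_zero] by (simp add: norm_mult mult.left_commute)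
  show "norm (of_real c * e) \<le> 9 * (M * W0)"
    using n0[OF c(1)] MW by linarith
  have "norm (of_real c * e' + of_real c' * e) \<le> norm (of_real c * e') + norm (of_real c' * e)"
    by (rule norm_triangle_ineq)
  then show "norm (of_real c * e' + of_real c' * e) \<le> 9 * (M * W1)"
    using n1[OF c(1)] n0[OF c(2)] MW by linarith
  have "norm (of_real c * e'' + 2 * (of_real c' * e') + of_real c'' * e)
      \<le> norm (of_real c * e'' + 2 * (of_real c' * e')) + norm (of_real c'' * e)"
    "norm (of_real c * e'' + 2 * (of_real c' * e')) \<le> norm (of_real c * e'') + norm (2 * (of_real c' * e'))"
    by (rule norm_triangle_ineq)+
  moreover have "norm (2 * (of_real c' * e')) = 2 * norm (of_real c' * e')"
    by (simp add: norm_mult)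
  ultimately have "norm (of_real c * e'' + 2 * (of_real c' * e') + of_real c'' * e)
      \<le> norm (of_real c * e'') + 2 * norm (of_real c' * e') + norm (of_real c'' * e)"
    by linarith
  then show "norm (of_real c * e'' + 2 * (of_real c' * e') + of_real c'' * e) \<le> 9 * (M * W2)"
    using n2[OF c(1)] n1[OF c(2)] n0[OF c(3)] MW by linarith
qed

lemma vanishes_at_edge:
  fixes f :: "real \<Rightarrow> 'a::{t2_space, zero}"
  assumes "isCont f b" "\<And>x. b < x \<Longrightarrow> f x = 0"
  shows "f b = 0"
proof -
  have lim: "(f \<longlongrightarrow> f b) (at_right b)"
    using assms(1) by (simp add: isCont_def filterlim_at_split)
  have "\<forall>\<^sub>F x in at_right b. f x = 0"
    using eventually_at_right_less[of b] by eventually_elim (rule assms(2))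
  then have lim0: "(f \<longlongrightarrow> 0) (at_right b)"
    by (rule tendsto_eventually)
  show ?thesis
    by (rule tendsto_unique[OF trivial_limit_at_right_real lim lim0])
qed

lemma deriv_vanishes_beyond_edge:
  assumes "(f has_real_derivative D) (at x)" "\<And>x. b < x \<Longrightarrow> f x = 0" "b < x"
  shows "D = 0"
proof -
  have "((\<lambda>_. 0) has_real_derivative 0) (at x)"
    by simp
  then have "(f has_real_derivative 0) (at x)"
    by (rule has_field_derivative_transform_within_open[where S = "{b<..}"]) (use assms(2,3) in auto)
  with assms(1) show ?thesis
    by (rule DERIV_unique)
qed


lemma cutoff_at_edge:
  fixes chi chi' :: "real \<Rightarrow> real"
  assumes chi_deriv: "\<And>x. (chi has_real_derivative chi' x) (at x)"
    and "\<And>x. isCont chi' x" and chi_vanish: "\<And>x. b < x \<Longrightarrow> chi x = 0"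
  shows "chi b = 0" "chi' b = 0"
proof -
  show "chi b = 0"
    using DERIV_isCont[OF chi_deriv] chi_vanish by (rule vanishes_at_edge)
  have "chi' x = 0" if "b < x" for x
    by (rule deriv_vanishes_beyond_edge[OF chi_deriv[of x] chi_vanish that])
  with assms(2) show "chi' b = 0"
    by (rule vanishes_at_edge)
qed

lemma abs_bounded_on_Icc:
  fixes f :: "real \<Rightarrow> real"
  assumes "continuous_on {a..b} f"
  obtains M where "\<And>x. x \<in> {a..b} \<Longrightarrow> \<bar>f x\<bar> \<le> M"
proof -
  have "bounded (f ` {a..b})"
    using assms by (intro compact_imp_bounded compact_continuous_image) auto
  then show ?thesis
    using that unfolding bounded_real by blast
qed

lemma log_weights_le_near_edge:
  fixes b z C0 :: real
  assumes "0 < b" "b / 2 < z" "1 \<le> - ln z" "0 \<le> C0"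
  shows "C0 / (ln z)\<^sup>2 \<le> C0" "2 * (C0 / (z * (- ln z) ^ 3)) \<le> 4 * C0 / b"
proof -
  have L: "1 \<le> (ln z)\<^sup>2" "1 \<le> (- ln z) ^ 3"
    using assms(3) one_le_power by (metis power2_minus, blast)
  then have "C0 / (ln z)\<^sup>2 \<le> C0 / 1"
    using assms(4) by (intro divide_left_mono) auto
  then show "C0 / (ln z)\<^sup>2 \<le> C0"
    by simp
  have "0 < - ln z"
    using assms(3) by linarith
  then have "0 < (- ln z) ^ 3"
    by (rule zero_less_power)
  moreover have "0 < z"
    using assms(1,2) by linarith
  moreover have "b / 2 * 1 \<le> z * (- ln z) ^ 3"
    using assms L(2) by (intro mult_mono) auto
  ultimately have "C0 / (z * (- ln z) ^ 3) \<le> C0 / (b / 2)"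
    using assms by (intro divide_left_mono mult_pos_pos) auto
  then show "2 * (C0 / (z * (- ln z) ^ 3)) \<le> 4 * C0 / b"
    by simp
qed

lemma has_vector_derivative_of_real_mult:
  fixes f :: "real \<Rightarrow> real" and h :: "real \<Rightarrow> complex"
  assumes "(f has_real_derivative f') (at z)" "(h has_vector_derivative h') (at z)"
  shows "((\<lambda>z. of_real (f z) * h z) has_vector_derivative of_real (f z) * h' + of_real f' * h z) (at z)"
  by (rule has_vector_derivative_mult[OF has_vector_derivative_of_real[OF assms(1)] assms(2)])

lemma cutoff_derivatives_bounded:
  fixes chi chi' chi'' :: "real \<Rightarrow> real"
  assumes "\<And>x. isCont chi x" "\<And>x. isCont chi' x" "\<And>x. isCont chi'' x"
  obtains M where "\<And>z. z \<in> {a..b} \<Longrightarrow> \<bar>chi z\<bar> \<le> M \<and> \<bar>chi' z\<bar> \<le> M \<and> \<bar>chi'' z\<bar> \<le> M"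
proof -
  have "continuous_on {a..b} (\<lambda>x. \<bar>chi x\<bar> + \<bar>chi' x\<bar> + \<bar>chi'' x\<bar>)"
    using assms by (intro continuous_at_imp_continuous_on ballI continuous_intros) auto
  then obtain M where M: "\<And>x. x \<in> {a..b} \<Longrightarrow> \<bar>\<bar>chi x\<bar> + \<bar>chi' x\<bar> + \<bar>chi'' x\<bar>\<bar> \<le> M"
    by (rule abs_bounded_on_Icc) blast
  have "\<bar>chi z\<bar> \<le> M \<and> \<bar>chi' z\<bar> \<le> M \<and> \<bar>chi'' z\<bar> \<le> M" if "z \<in> {a..b}" for z
    using M[OF that] by auto
  then show ?thesis
    by (rule that)
qed

lemma tendsto_cutoff_mult_zero:
  fixes chi :: "real \<Rightarrow> real" and E :: "real \<Rightarrow> complex"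
  assumes "a < b" "isCont chi b" "chi b = 0" "\<And>z. z \<in> {a<..<b} \<Longrightarrow> norm (E z) \<le> K"
  shows "((\<lambda>z. of_real (chi z) * E z) \<longlongrightarrow> 0) (at_left b)"
proof (rule tendsto_zero_at_left_if_norm_le[OF \<open>a < b\<close>])
  show "norm (of_real (chi z) * E z) \<le> \<bar>chi z\<bar> * K" if "z \<in> {a<..<b}" for z
    using assms(4)[OF that] by (simp add: norm_mult mult_left_mono)
qed (use assms(2,3) in \<open>auto intro!: continuous_intros\<close>)

lemma log_amplitude_cutoff_product:
  fixes chi chi' chi'' :: "real \<Rightarrow> real" and E E' E'' :: "real \<Rightarrow> complex"
  assumes b: "0 < b" "b < exp (- 3)" and m: "0 < m" and C0: "0 \<le> C0"
    and chi_deriv: "\<And>x. (chi has_real_derivative chi' x) (at x)"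
    and chi'_deriv: "\<And>x. (chi' has_real_derivative chi'' x) (at x)"
    and chi''_cont: "\<And>x. isCont chi'' x"
    and chi_vanish: "\<And>x. b < x \<Longrightarrow> chi x = 0"
    and E_deriv: "\<And>z. z \<in> {0<..<b} \<Longrightarrow> (E has_vector_derivative E' z) (at z)"
    and E'_deriv: "\<And>z. z \<in> {0<..<b} \<Longrightarrow> (E' has_vector_derivative E'' z) (at z)"
    and E_le: "\<And>z. z \<in> {0<..<b} \<Longrightarrow> norm (E z) \<le> C0 / (ln z)\<^sup>2"
    and E'_le: "\<And>z. z \<in> {0<..<b} \<Longrightarrow> norm (E' z) \<le> 2 * (C0 / (z * (- ln z) ^ 3))"
    and E''_le: "\<And>z. z \<in> {0<..<b} \<Longrightarrow> norm (E'' z) \<le> 4 * (C0 / (z\<^sup>2 * (- ln z) ^ 3))"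
  obtains A where "log_amplitude b m A (\<lambda>z. of_real (chi z) * E z)
      (\<lambda>z. of_real (chi z) * E' z + of_real (chi' z) * E z)
      (\<lambda>z. of_real (chi z) * E'' z + 2 * (of_real (chi' z) * E' z) + of_real (chi'' z) * E z)"
proof -
  have chi_cont: "isCont chi x" "isCont chi' x" for x
    using DERIV_isCont chi_deriv chi'_deriv by blast+
  obtain M where M: "\<And>z. z \<in> {0..b} \<Longrightarrow> \<bar>chi z\<bar> \<le> M \<and> \<bar>chi' z\<bar> \<le> M \<and> \<bar>chi'' z\<bar> \<le> M"
    using cutoff_derivatives_bounded[OF chi_cont chi''_cont] by blast
  note chi_b = cutoff_at_edge[OF chi_deriv chi_cont(2) chi_vanish]
  have "b < 1"
    using b(2) by (rule less_one_if_less_exp_neg_3)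
  then have z: "0 < z" "z < 1" "1 \<le> - ln z" if "z \<in> {0<..<b}" for z
    using that b neg_ln_gt_3[of z] by auto
  have E_near_b: "norm (E z) \<le> C0" "norm (E' z) \<le> 4 * C0 / b" if "z \<in> {b / 2<..<b}" for z
  proof -
    have "b / 2 < z" "z \<in> {0<..<b}"
      using that b by auto
    note near_edge = log_weights_le_near_edge[OF b(1) this(1) z(3)[OF this(2)] C0]
    show "norm (E z) \<le> C0" "norm (E' z) \<le> 4 * C0 / b"
      using E_le[OF \<open>z \<in> {0<..<b}\<close>] E'_le[OF \<open>z \<in> {0<..<b}\<close>] near_edge by linarith+
  qed
  show ?thesis
  proof (rule that[of "9 * (M * C0)"], unfold_locales)
    show "((\<lambda>z. of_real (chi z) * E z) has_vector_derivative
        of_real (chi z) * E' z + of_real (chi' z) * E z) (at z)" if "z \<in> {0<..<b}" for z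
      by (rule has_vector_derivative_of_real_mult[OF chi_deriv E_deriv[OF that]])
    show "((\<lambda>z. of_real (chi z) * E' z + of_real (chi' z) * E z) has_vector_derivative
        of_real (chi z) * E'' z + 2 * (of_real (chi' z) * E' z) + of_real (chi'' z) * E z) (at z)"
      if "z \<in> {0<..<b}" for z
      by (rule has_vector_derivative_eq_rhs[OF has_vector_derivative_add[OF
            has_vector_derivative_of_real_mult[OF chi_deriv E'_deriv[OF that]]
            has_vector_derivative_of_real_mult[OF chi'_deriv E_deriv[OF that]]]]) (simp add: algebra_simps)
    have M': "\<bar>chi z\<bar> \<le> M" "\<bar>chi' z\<bar> \<le> M" "\<bar>chi'' z\<bar> \<le> M" if "z \<in> {0<..<b}" for z
      using M[of z] that by auto
    note product_le = norm_cutoff_product_le[OF M' _ log_weights_mono[OF z(1,2) C0] E_le E'_le E''_le]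
    show "norm (of_real (chi z) * E z) \<le> 9 * (M * C0) / (ln z)\<^sup>2" if "z \<in> {0<..<b}" for z
      using product_le(1)[OF that that that _ that that that] that C0 by simp
    show "norm (of_real (chi z) * E' z + of_real (chi' z) * E z) \<le> 9 * (M * C0) / (z * (- ln z) ^ 3)"
      if "z \<in> {0<..<b}" for z
      using product_le(2)[OF that that that _ that that that] that C0 by simp
    show "norm (of_real (chi z) * E'' z + 2 * (of_real (chi' z) * E' z) + of_real (chi'' z) * E z)
        \<le> 9 * (M * C0) / (z\<^sup>2 * (- ln z) ^ 3)" if "z \<in> {0<..<b}" for z
      using product_le(3)[OF that that that _ that that that] that C0 by simp
    have "b / 2 < b"
      using b by simp
    note tendsto_zero = tendsto_cutoff_mult_zero[OF this]
    show "((\<lambda>z. of_real (chi z) * E z) \<longlongrightarrow> 0) (at_left b)"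
      by (rule tendsto_zero[OF chi_cont(1) chi_b(1) E_near_b(1)])
    show "((\<lambda>z. of_real (chi z) * E' z + of_real (chi' z) * E z) \<longlongrightarrow> 0) (at_left b)"
      by (rule tendsto_add_zero[OF tendsto_zero[OF chi_cont(1) chi_b(1) E_near_b(2)]
            tendsto_zero[OF chi_cont(2) chi_b(2) E_near_b(1)]])
  qed (use b m chi_b in auto)
qed

lemma smooth_has_derivatives:
  fixes f :: "real \<Rightarrow> real"
  assumes "\<forall>k x. ((deriv ^^ k) f) differentiable (at x)"
  shows "(f has_real_derivative deriv f x) (at x)"
    and "(deriv f has_real_derivative deriv (deriv f) x) (at x)"
    and "isCont (deriv (deriv f)) x"
  using assms[rule_format, of 0 x] assms[rule_format, of 1 x] assms[rule_format, of 2 x]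
  by (simp_all add: DERIV_deriv_iff_real_differentiable differentiable_imp_continuous_within numeral_2_eq_2)

lemma norm_le_log_weights:
  fixes z C0 :: real and e e' e'' :: complex
  assumes z: "0 < z" "z < 1" "3 \<le> - ln z" and C0: "0 \<le> C0"
    and e: "norm e \<le> C0 * \<bar>inverse ((ln z)\<^sup>2)\<bar>"
      "norm e' \<le> C0 * \<bar>deriv (\<lambda>y. inverse ((ln y)\<^sup>2)) z\<bar>"
      "norm e'' \<le> C0 * \<bar>(deriv ^^ 2) (\<lambda>y. inverse ((ln y)\<^sup>2)) z\<bar>"
  shows "norm e \<le> C0 / (ln z)\<^sup>2" "norm e' \<le> 2 * (C0 / (z * (- ln z) ^ 3))"
    and "norm e'' \<le> 4 * (C0 / (z\<^sup>2 * (- ln z) ^ 3))"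
proof -
  show "norm e \<le> C0 / (ln z)\<^sup>2"
    using e(1) by (simp add: divide_inverse)
  show "norm e' \<le> 2 * (C0 / (z * (- ln z) ^ 3))"
    using e(2) unfolding abs_deriv_inverse_ln_squared[OF z(1,2)] by (simp add: mult.commute)
  have "C0 * \<bar>(deriv ^^ 2) (\<lambda>y. inverse ((ln y)\<^sup>2)) z\<bar> \<le> C0 * (4 / (z\<^sup>2 * (- ln z) ^ 3))"
    using z C0 by (intro mult_left_mono abs_deriv2_inverse_ln_squared_le) auto
  then show "norm e'' \<le> 4 * (C0 / (z\<^sup>2 * (- ln z) ^ 3))"
    using e(3) by (simp add: mult.commute)
qed

lemma integral_cutoff_eq_Icc:
  assumes "\<And>x. b < x \<Longrightarrow> chi x = 0"
  shows "integral {0..} (\<lambda>z. exp (- \<i> * complex_of_real (t * sqrt (z\<^sup>2 + m\<^sup>2)))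
      * complex_of_real (z * chi z / sqrt (z\<^sup>2 + m\<^sup>2)) * E z)
    = integral {0..b} (\<lambda>z. phase m t z * complex_of_real (z / sqrt (z\<^sup>2 + m\<^sup>2)) * (of_real (chi z) * E z))"
proof -
  have "integral {0..} (\<lambda>z. exp (- \<i> * complex_of_real (t * sqrt (z\<^sup>2 + m\<^sup>2)))
      * complex_of_real (z * chi z / sqrt (z\<^sup>2 + m\<^sup>2)) * E z)
    = integral {0..b} (\<lambda>z. exp (- \<i> * complex_of_real (t * sqrt (z\<^sup>2 + m\<^sup>2)))
      * complex_of_real (z * chi z / sqrt (z\<^sup>2 + m\<^sup>2)) * E z)"
    by (rule integral_Ici_eq_Icc_if_vanishing) (simp add: assms)
  also have "\<dots> = integral {0..b} (\<lambda>z. phase m t z * complex_of_real (z / sqrt (z\<^sup>2 + m\<^sup>2)) * (of_real (chi z) * E z))"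
    unfolding phase_def by (rule integral_cong) (simp add: mult_ac)
  finally show ?thesis .
qed

lemma oscillatory_integral_log_decay:
  fixes chi :: "real \<Rightarrow> real" and Er Er1 Er2 :: "real \<Rightarrow> complex"
  assumes z0: "0 < z0" "z0 < exp (- 3) / 2" and m: "0 < m"
    and chi_smooth: "\<forall>k x. ((deriv ^^ k) chi) differentiable (at x)"
    and chi_support: "\<forall>x. \<bar>x\<bar> > 2 * z0 \<longrightarrow> chi x = 0"
    and Er_deriv: "\<forall>z\<in>{0<..<2*z0}. (Er has_vector_derivative Er1 z) (at z)
                                   \<and> (Er1 has_vector_derivative Er2 z) (at z)"
    and Er_le: "\<forall>z\<in>{0<..<2*z0}. norm (Er z) \<le> C0 * \<bar>inverse ((ln z)\<^sup>2)\<bar>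
                              \<and> norm (Er1 z) \<le> C0 * \<bar>deriv (\<lambda>y. inverse ((ln y)\<^sup>2)) z\<bar>
                              \<and> norm (Er2 z) \<le> C0 * \<bar>(deriv ^^ 2) (\<lambda>y. inverse ((ln y)\<^sup>2)) z\<bar>"
  shows "\<exists>C. \<forall>t>2. norm (integral {0..} (\<lambda>z. exp (- \<i> * complex_of_real (t * sqrt (z\<^sup>2 + m\<^sup>2)))
      * complex_of_real (z * chi z / sqrt (z\<^sup>2 + m\<^sup>2)) * Er z)) \<le> C / (t * (ln t)\<^sup>2)"
proof -
  define b where "b = 2 * z0"
  have b: "0 < b" "b < exp (- 3)"
    using z0 by (simp_all add: b_def)
  then have "b < 1"
    by (intro less_one_if_less_exp_neg_3)
  then have z: "0 < z" "z < 1" "3 \<le> - ln z" if "z \<in> {0<..<b}" for z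
    using that b neg_ln_gt_3[of z] by auto
  have "0 \<le> C0 * \<bar>inverse ((ln z0)\<^sup>2)\<bar>" "0 < \<bar>inverse ((ln z0)\<^sup>2)\<bar>"
    using Er_le z0 z[of z0] by (fastforce simp: b_def intro: order_trans[OF norm_ge_zero])+
  then have C0: "0 \<le> C0"
    by (simp add: zero_le_mult_iff)
  have chi_vanish: "chi x = 0" if "b < x" for x
    using that b chi_support by (simp add: b_def)
  have Er_derivs: "(Er has_vector_derivative Er1 z) (at z)" "(Er1 has_vector_derivative Er2 z) (at z)"
    if "z \<in> {0<..<b}" for z
    using that Er_deriv by (auto simp: b_def)
  have Er_bounds: "norm (Er z) \<le> C0 / (ln z)\<^sup>2" "norm (Er1 z) \<le> 2 * (C0 / (z * (- ln z) ^ 3))"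
    "norm (Er2 z) \<le> 4 * (C0 / (z\<^sup>2 * (- ln z) ^ 3))" if "z \<in> {0<..<b}" for z
    using that Er_le by (intro norm_le_log_weights[OF z[OF that] C0]; force simp: b_def)+
  obtain A where A: "log_amplitude b m A (\<lambda>z. of_real (chi z) * Er z)
      (\<lambda>z. of_real (chi z) * Er1 z + of_real (deriv chi z) * Er z)
      (\<lambda>z. of_real (chi z) * Er2 z + 2 * (of_real (deriv chi z) * Er1 z) + of_real (deriv (deriv chi) z) * Er z)"
    by (rule log_amplitude_cutoff_product[OF b m C0 smooth_has_derivatives[OF chi_smooth]
          chi_vanish Er_derivs Er_bounds])
  show ?thesis
    using log_amplitude.norm_integral_decay[OF A] by (simp only: integral_cutoff_eq_Icc[OF chi_vanish])
qed

theorem corollary4p3: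
  "\<exists>z1::real>0. \<forall>z0 m::real. \<forall>chi::real \<Rightarrow> real. \<forall>Er::real \<Rightarrow> complex. \<forall>Er1 Er2 C0.
     0 < z0 \<and> z0 < z1 \<and> m > 0
     \<and> (\<forall>k x. ((deriv ^^ k) chi) differentiable (at x))
     \<and> (\<forall>x. chi (- x) = chi x)
     \<and> (\<forall>x. \<bar>x\<bar> < z0 \<longrightarrow> chi x = 1)
     \<and> (\<forall>x. \<bar>x\<bar> > 2 * z0 \<longrightarrow> chi x = 0)
     \<and> (\<forall>z\<in>{0<..<2*z0}. (Er has_vector_derivative Er1 z) (at z)
                           \<and> (Er1 has_vector_derivative Er2 z) (at z))
     \<and> (\<forall>z\<in>{0<..<2*z0}.
            norm (Er z) \<le> C0 * \<bar>inverse ((ln z)\<^sup>2)\<bar>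
          \<and> norm (Er1 z) \<le> C0 * \<bar>deriv (\<lambda>y. inverse ((ln y)\<^sup>2)) z\<bar>
          \<and> norm (Er2 z) \<le> C0 * \<bar>(deriv ^^ 2) (\<lambda>y. inverse ((ln y)\<^sup>2)) z\<bar>)
     \<longrightarrow> (\<exists>C. \<forall>t>2.
            norm (integral {0..} (\<lambda>z. exp (- \<i> * complex_of_real (t * sqrt (z\<^sup>2 + m\<^sup>2)))
                    * complex_of_real (z * chi z / sqrt (z\<^sup>2 + m\<^sup>2)) * Er z))
              \<le> C / (t * (ln t)\<^sup>2))"
proof (rule exI[of _ "exp (- 3) / 2"], intro conjI allI impI)
  show "(0::real) < exp (- 3) / 2"
    by simp
qed (elim conjE, rule oscillatory_integral_log_decay)

end
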